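(* Every integer partition $\lambda$ satisfies at least one of the following: (1) $\lambda$ is novel, or $\lambda=c\mu$ for some integer $c\ge 2$ and some novel partition $\mu$; (2) there is a novel partition $\mu$ of strictly smaller length than $\lambda$ with $\lambda\Rightarrow\mu$; (3) $\lambda^{\perp B}=\emptyset$.
   Context: An integer partition is $\lambda=(\lambda_1,\dots,\lambda_k)$ with integers $\lambda_1\ge\dots\ge\lambda_k\ge 1$; $k$ is its length; $c\lambda=(c\lambda_1,\dots,c\lambda_k)$. For $v\in\mathbb{Z}^k$ let $v^{\perp B}=\{x\in\{-1,1\}^k: v\cdot x=0\}$; $\lambda^{\perp B}$ is this set for $(\lambda_1,\dots,\lambda_k)$. $V_\lambda\subset\mathbb{Z}^k$ is the set of vectors obtained from $(\lambda_1,\dots,\lambda_k)$ by permuting coordinates and changing signs of some coordinates, with first coordinate positive. For $I\subset\{1,\dots,m\}$, $\mathrm{Proj}_I:\{-1,1\}^m\to\{-1,1\}^{|I|}$ keeps the coordinates indexed by $I$. Reduction: for partitions $\mu$ of length $m$ and $\lambda$ of length $k\le m$, $\mu\Rightarrow\lambda$ iff there exist $I\subset\{1,\dots,m\}$, $|I|=k$, and $v\in V_\lambda$ with $\mathrm{Proj}_I(\mu^{\perp B})\subset v^{\perp B}$. $\mu$ strictly reduces to $\lambda$ iff $\mu\Rightarrow\lambda$ and not $\lambda\Rightarrow\mu$. Partitions $\lambda,\mu$ of the same length are equivalent iff there is $w\in V_\mu$ with $\lambda^{\perp B}=w^{\perp B}$. A partition $\lambda$ is novel iff $\lambda^{\perp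 B}\neq\emptyset$, $\lambda$ strictly reduces to no partition, and $\lambda$ is lexicographically smallest among partitions equivalent to it. *)

theory Defs
  imports Main "HOL-Library.Multiset"
begin

definition is_partition :: "nat list \<Rightarrow> bool" where
  "is_partition lam \<longleftrightarrow> lam \<noteq> [] \<and> sorted_wrt (\<ge>) lam \<and> (\<forall>x\<in>set lam. x \<ge> 1)"

definition perpB :: "int list \<Rightarrow> int list set" where
  "perpB v = {x. length x = length v \<and> set x \<subseteq> {-1, 1} \<and>
                 (\<Sum>i<length v. v ! i * x ! i) = 0}"

abbreviation lamPerpB :: "nat list \<Rightarrow> int list set" where
  "lamPerpB lam \<equiv> perpB (map int lam)"

text \<open>V_lambda: signed permutations of lambda with positive first coordinate.\<close>
definition Vset :: "nat list \<Rightarrow> int list set" where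
  "Vset lam = {v. \<exists>ys s. mset ys = mset lam \<and> length s = length lam \<and> set s \<subseteq> {-1, 1} \<and>
                  v = map2 (\<lambda>a b. a * int b) s ys \<and> v \<noteq> [] \<and> hd v > 0}"

text \<open>Projection onto coordinates indexed by I (0-based), keeping order.\<close>
definition Proj :: "nat set \<Rightarrow> int list \<Rightarrow> int list" where
  "Proj I x = nths x I"

definition reduces :: "nat list \<Rightarrow> nat list \<Rightarrow> bool" (infix "\<Rightarrow>\<^sub>p" 50) where
  "mu \<Rightarrow>\<^sub>p lam \<longleftrightarrow> is_partition mu \<and> is_partition lam \<and> length lam \<le> length mu \<and>
     (\<exists>I. I \<subseteq> {..<length mu} \<and> card I = length lam \<and>
        (\<exists>v\<in>Vset lam. Proj I ` lamPerpB mu \<subseteq> perpB v))"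

definition strictly_reduces :: "nat list \<Rightarrow> nat list \<Rightarrow> bool" where
  "strictly_reduces mu lam \<longleftrightarrow> (mu \<Rightarrow>\<^sub>p lam) \<and> \<not> (lam \<Rightarrow>\<^sub>p mu)"

definition equivalent :: "nat list \<Rightarrow> nat list \<Rightarrow> bool" where
  "equivalent lam mu \<longleftrightarrow> is_partition lam \<and> is_partition mu \<and> length lam = length mu \<and>
     (\<exists>w\<in>Vset mu. lamPerpB lam = perpB w)"

definition lex_le :: "nat list \<Rightarrow> nat list \<Rightarrow> bool" where
  "lex_le xs ys \<longleftrightarrow> xs = ys \<or> (xs, ys) \<in> lexord {(a, b). a < b}"

definition novel :: "nat list \<Rightarrow> bool" where
  "novel lam \<longleftrightarrow> is_partition lam \<and> lamPerpB lam \<noteq> {} \<and>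
     \<not> (\<exists>mu. strictly_reduces lam mu) \<and>
     (\<forall>mu. equivalent lam mu \<longrightarrow> lex_le lam mu)"

end

theory Submission imports Defs "HOL-Combinatorics.List_Permutation" begin

(* A reduction mu => lam is recast in an index form (sred): the
   parts of lam are placed injectively, via an index map g and with signs s, at
   coordinates of mu so that the form  x |-> sum_j s_j lam_j x_(g j)  vanishes on
   mu^perpB.  In this form reduction is visibly transitive and preserves
   non-emptiness of the perp set.  Conversely, every integer linear form vanishing
   on lam^perpB with support S gives a reduction of lam to the partition of the
   absolute values of its nonzero coefficients, of length |S|.  Consequently, if
   lam reduces to no shorter partition, every vanishing form is proportional to
   lam, so every reduction of lam is a multiple of lam, and the primitive
   partition lam0 with lam = c lam0 is novel.  The theorem follows by strong
   induction on the length: either lam reduces to something shorter and we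
   continue there, or lam = c lam0 with lam0 novel. *)

lemma lamPerpB_iff:
  "x \<in> lamPerpB A \<longleftrightarrow> length x = length A \<and> set x \<subseteq> {-1,1} \<and> (\<Sum>i<length A. int (A!i) * x!i) = 0"
  by (simp add: perpB_def)

lemma bij_betw_nth_sorted_list_of_set:
  assumes "finite I"
  shows "bij_betw ((!) (sorted_list_of_set I)) {..<card I} I"
  using bij_betw_nth[of "sorted_list_of_set I"] assms by simp

lemma nths_eq_map_sorted_list_of_set:
  assumes "I \<subseteq> {..<length x}"
  shows "nths x I = map ((!) x) (sorted_list_of_set I)"
proof -
  let ?n = "length x"
  have "sorted_list_of_set I = filter (\<lambda>i. i \<in> I) [0..<?n]"
    using assms finite_subset[OF assms] by (intro sorted_list_of_set_unique[THEN iffD1])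
      (auto simp: sorted_wrt_filter distinct_card[symmetric] intro: arg_cong[where f=card])
  moreover have "zip x [0..<?n] = map (\<lambda>i. (x!i, i)) [0..<?n]"
    by (rule nth_equalityI) auto
  ultimately show ?thesis unfolding nths_def
    by (simp add: filter_map o_def map_map)
qed

lemma mset_map_reindex:
  assumes "bij_betw p {..<m} {..<m}"
  shows "mset (map (\<lambda>i. f (p i)) [0..<m]) = mset (map f [0..<m])"
proof -
  have "mset (map (\<lambda>i. f (p i)) [0..<m]) = image_mset f (image_mset p (mset_set {..<m}))"
    by (simp add: atLeast0LessThan multiset.map_comp o_def)
  also have "image_mset p (mset_set {..<m}) = mset_set {..<m}"
    using assms image_mset_mset_set[of p "{..<m}"] unfolding bij_betw_def by simp
  finally show ?thesis by (simp add: atLeast0LessThan)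
qed

lemma sorted_desc_mset_eq:
  fixes xs ys :: "'a::linorder list"
  assumes "sorted_wrt (\<ge>) xs" "sorted_wrt (\<ge>) ys" "mset xs = mset ys"
  shows "xs = ys"
proof -
  have "sorted (rev xs)" "sorted (rev ys)" using assms(1,2) by (simp_all add: sorted_wrt_rev)
  moreover have "mset (rev xs) = mset (rev ys)" using assms(3) by simp
  ultimately have "sort (rev ys) = rev xs" "sort (rev ys) = rev ys"
    using properties_for_sort by metis+
  then show ?thesis by simp
qed

section \<open>Scaling partitions\<close>

lemma perpB_scale:
  assumes "c > 0"
  shows "lamPerpB (map (\<lambda>x. c*x) mu) = lamPerpB mu"
proof -
  have "(\<Sum>i<length mu. int (map (\<lambda>x. c*x) mu ! i) * x!i) = int c * (\<Sum>i<length mu. int (mu!i) * x!i)"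
    for x :: "int list"
    by (simp add: sum_distrib_left mult.assoc)
  then show ?thesis unfolding perpB_def using assms by auto
qed

lemma is_partition_unscale:
  assumes "is_partition (map (\<lambda>x. c*x) rho)"
  shows "is_partition rho \<and> c \<ge> 1"
proof -
  have ne: "rho \<noteq> []" and ge: "\<forall>x\<in>set rho. c*x \<ge> 1" and so: "sorted_wrt (\<lambda>a b. c*a \<ge> c*b) rho"
    using assms unfolding is_partition_def by (auto simp: sorted_wrt_map)
  have c1: "c \<ge> 1" using ne ge by (cases rho) auto
  have "\<forall>x\<in>set rho. x \<ge> 1" using ge by (simp add: Suc_le_eq)
  moreover have "sorted_wrt (\<ge>) rho" by (rule sorted_wrt_mono_rel[OF _ so]) (use c1 in simp)
  ultimately show ?thesis using ne c1 unfolding is_partition_def by blast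
qed

lemma sorted_desc_scale: "sorted_wrt (\<ge>) xs \<Longrightarrow> sorted_wrt (\<ge>) (map (\<lambda>x. (c::nat)*x) xs)"
  unfolding sorted_wrt_map by (rule sorted_wrt_mono_rel[where P="(\<ge>)"]) (auto simp: mult_le_mono2)

text \<open>If a mu = b nu with a, b positive, then mu and nu are both multiples of a common list
  (namely mu divided by b / gcd a b).\<close>
lemma common_submultiple:
  fixes a b :: nat and mu nu :: "nat list"
  assumes "a > 0" "b > 0" "map (\<lambda>x. a*x) mu = map (\<lambda>x. b*x) nu"
  shows "\<exists>rho d e. mu = map (\<lambda>x. d*x) rho \<and> nu = map (\<lambda>x. e*x) rho"
proof -
  define g where "g = gcd a b"
  define a' where "a' = a div g"
  define b' where "b' = b div g"
  have g0: "g > 0" using assms(1) g_def by simp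
  have ab: "a = g * a'" "b = g * b'" by (simp_all add: a'_def b'_def g_def)
  have cop: "coprime a' b'" using div_gcd_coprime[of a b] assms(1) a'_def b'_def g_def by simp
  have b'0: "b' > 0" using ab assms(2) by simp
  have len: "length mu = length nu" using assms(3) by (metis length_map)
  have eq: "a' * mu!i = b' * nu!i" if "i < length mu" for i
  proof -
    have "map (\<lambda>x. a*x) mu ! i = map (\<lambda>x. b*x) nu ! i" using assms(3) by simp
    then have "a * mu!i = b * nu!i" using that len by simp
    then show ?thesis using ab g0 by (simp add: mult.assoc)
  qed
  have dv: "b' dvd mu!i" if "i < length mu" for i
  proof -
    have "b' dvd a' * mu!i" using eq[OF that] by simp
    then show ?thesis using cop by (simp add: coprime_commute coprime_dvd_mult_right_iff)
  qed
  define rho where "rho = map (\<lambda>x. x div b') mu"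
  have "mu = map (\<lambda>x. b'*x) rho"
    by (rule nth_equalityI) (simp_all add: rho_def dv)
  moreover have "nu = map (\<lambda>x. a'*x) rho"
  proof (rule nth_equalityI)
    show "length nu = length (map (\<lambda>x. a'*x) rho)" using len by (simp add: rho_def)
    fix i assume "i < length nu"
    then have i: "i < length mu" using len by simp
    have "b' * nu!i = b' * (a' * (mu!i div b'))"
      using eq[OF i] dv[OF i] by (simp add: mult.left_commute)
    then show "nu!i = map (\<lambda>x. a'*x) rho ! i" using i b'0 by (simp add: rho_def)
  qed
  ultimately show ?thesis by blast
qed

definition primitive :: "nat list \<Rightarrow> bool" where
  "primitive lam \<longleftrightarrow> (\<forall>c rho. is_partition rho \<and> lam = map (\<lambda>x. c*x) rho \<longrightarrow> c = 1)"

text \<open>Every partition is a multiple of a primitive one: take a submultiple with least first part.\<close>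
lemma primitive_decomposition:
  assumes "is_partition lam"
  obtains c lam0 where "is_partition lam0" "primitive lam0" "c \<ge> 1" "lam = map (\<lambda>x. c*x) lam0"
proof -
  define C where "C = {rho. is_partition rho \<and> (\<exists>c. lam = map (\<lambda>x. c*x) rho)}"
  have "lam = map (\<lambda>x. 1*x) lam" by simp
  then have "lam \<in> C" unfolding C_def using assms by blast
  then obtain lam0 where l0: "lam0 \<in> C" and least: "\<forall>y\<in>C. hd lam0 \<le> hd y"
    using ex_has_least_nat[of "\<lambda>r. r \<in> C" lam hd] by blast
  then obtain c where lc: "lam = map (\<lambda>x. c*x) lam0" and p0: "is_partition lam0"
    unfolding C_def by blast
  have "primitive lam0" unfolding primitive_def
  proof (intro allI impI)
    fix e rho assume "is_partition rho \<and> lam0 = map (\<lambda>x. e*x) rho"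
    then have pr: "is_partition rho" and er: "lam0 = map (\<lambda>x. e*x) rho" by blast+
    have "lam = map (\<lambda>x. (c*e)*x) rho" using lc er by (simp add: mult.assoc)
    then have "hd lam0 \<le> hd rho" using least pr unfolding C_def by blast
    moreover have "rho \<noteq> []" "hd rho \<ge> 1" using pr unfolding is_partition_def by auto
    moreover have "e \<ge> 1" using is_partition_unscale p0 er by blast
    ultimately show "e = 1" using er by (simp add: hd_map)
  qed
  moreover have "c \<ge> 1" using is_partition_unscale assms lc by blast
  ultimately show ?thesis using that p0 lc by blast
qed

lemma proportional_to_primitive:
  assumes "primitive lam0" "is_partition lam0" "is_partition nu"
    "a > 0" "b > 0" "map (\<lambda>x. a*x) nu = map (\<lambda>x. b*x) lam0"
  shows "\<exists>d\<ge>1. nu = map (\<lambda>x. d*x) lam0"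
proof -
  obtain rho d e where rde: "nu = map (\<lambda>x. d*x) rho" "lam0 = map (\<lambda>x. e*x) rho"
    using common_submultiple[OF assms(4-6)] by blast
  have "is_partition rho" using is_partition_unscale assms(2) rde(2) by blast
  then have "lam0 = rho" using assms(1) rde(2) unfolding primitive_def by auto
  moreover have "d \<ge> 1" using is_partition_unscale assms(3) rde(1) by blast
  ultimately show ?thesis using rde(1) by blast
qed

section \<open>Reduction in index form\<close>

definition sred :: "nat list \<Rightarrow> nat list \<Rightarrow> bool" where
  "sred A B \<longleftrightarrow> is_partition A \<and> is_partition B \<and>
     (\<exists>g s. inj_on g {..<length B} \<and> g ` {..<length B} \<subseteq> {..<length A} \<and>
        (\<forall>j<length B. s j \<in> {-1,1::int}) \<and>
        (\<forall>x\<in>lamPerpB A. (\<Sum>j<length B. s j * int (B!j) * x!(g j)) = 0))"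

lemma sredI:
  assumes "is_partition A" "is_partition B" "inj_on g {..<length B}" "g ` {..<length B} \<subseteq> {..<length A}"
    "\<forall>j<length B. s j \<in> {-1,1::int}" "\<forall>x\<in>lamPerpB A. (\<Sum>j<length B. s j * int (B!j) * x!(g j)) = 0"
  shows "sred A B"
  using assms unfolding sred_def by blast

lemma sredE:
  assumes "sred A B"
  obtains g s where "is_partition A" "is_partition B" "inj_on g {..<length B}"
    "g ` {..<length B} \<subseteq> {..<length A}" "\<forall>j<length B. s j \<in> {-1,1::int}"
    "\<forall>x\<in>lamPerpB A. (\<Sum>j<length B. s j * int (B!j) * x!(g j)) = 0"
  using assms unfolding sred_def by blast

lemma sred_partitions: "sred A B \<Longrightarrow> is_partition A \<and> is_partition B"
  by (simp add: sred_def)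

lemma sred_length: "sred A B \<Longrightarrow> length B \<le> length A"
  by (erule sredE) (metis card_inj_on_le card_lessThan finite_lessThan)

lemma sred_of_perp_subset:
  assumes "is_partition A" "is_partition B" "length A = length B" "lamPerpB A \<subseteq> lamPerpB B"
  shows "sred A B"
proof (rule sredI[where g=id and s="\<lambda>_. 1"])
  show "\<forall>x\<in>lamPerpB A. (\<Sum>j<length B. 1 * int (B!j) * x!(id j)) = 0"
    using assms(4) by (auto simp: lamPerpB_iff)
qed (use assms in simp_all)

lemma sred_transport:
  assumes "g ` {..<length B} \<subseteq> {..<length A}" "\<forall>j<length B. s j \<in> {-1,1::int}" "x \<in> lamPerpB A"
    "(\<Sum>j<length B. s j * int (B!j) * x!(g j)) = 0"
  shows "map (\<lambda>j. s j * x!(g j)) [0..<length B] \<in> lamPerpB B"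
proof -
  have lx: "length x = length A" "set x \<subseteq> {-1,1}" using assms(3) lamPerpB_iff by auto
  have "set (map (\<lambda>j. s j * x!(g j)) [0..<length B]) \<subseteq> {-1,1}"
  proof
    fix y assume "y \<in> set (map (\<lambda>j. s j * x!(g j)) [0..<length B])"
    then obtain j where j: "j < length B" "y = s j * x!(g j)" by auto
    have "g j < length x" using assms(1) j(1) lx(1) by auto
    then have "x!(g j) \<in> {-1,1}" using lx(2) nth_mem by blast
    then show "y \<in> {-1,1}" using assms(2) j by auto
  qed
  moreover have "(\<Sum>i<length B. int (B!i) * map (\<lambda>j. s j * x!(g j)) [0..<length B] ! i)
      = (\<Sum>j<length B. s j * int (B!j) * x!(g j))"
    by (rule sum.cong) (auto simp: algebra_simps)
  ultimately show ?thesis using assms(4) unfolding lamPerpB_iff by simp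
qed

lemma sred_perp_nonempty:
  assumes "sred A B" "lamPerpB A \<noteq> {}"
  shows "lamPerpB B \<noteq> {}"
proof -
  obtain x where x: "x \<in> lamPerpB A" using assms(2) by blast
  obtain g s where g: "g ` {..<length B} \<subseteq> {..<length A}" and s: "\<forall>j<length B. s j \<in> {-1,1::int}"
    and z: "\<forall>x\<in>lamPerpB A. (\<Sum>j<length B. s j * int (B!j) * x!(g j)) = 0"
    using assms(1) by (rule sredE)
  show ?thesis using sred_transport[OF g s x] z x by blast
qed

text \<open>Reductions compose: compose the index maps and multiply the signs.\<close>
lemma sred_trans:
  assumes "sred A B" "sred B C"
  shows "sred A C"
proof -
  obtain g s where pA: "is_partition A" and g: "inj_on g {..<length B}" "g ` {..<length B} \<subseteq> {..<length A}"
    and s: "\<forall>j<length B. s j \<in> {-1,1::int}"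
    and zA: "\<forall>x\<in>lamPerpB A. (\<Sum>j<length B. s j * int (B!j) * x!(g j)) = 0"
    using assms(1) by (rule sredE)
  obtain h t where pC: "is_partition C" and h: "inj_on h {..<length C}" "h ` {..<length C} \<subseteq> {..<length B}"
    and t: "\<forall>j<length C. t j \<in> {-1,1::int}"
    and zB: "\<forall>y\<in>lamPerpB B. (\<Sum>j<length C. t j * int (C!j) * y!(h j)) = 0"
    using assms(2) by (rule sredE)
  show ?thesis
  proof (rule sredI[where g="g \<circ> h" and s="\<lambda>l. t l * s (h l)", OF pA pC])
    show "inj_on (g \<circ> h) {..<length C}" using h g by (meson comp_inj_on inj_on_subset)
    show "(g \<circ> h) ` {..<length C} \<subseteq> {..<length A}" using h(2) g(2) by auto
    show "\<forall>j<length C. t j * s (h j) \<in> {-1,1}"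
    proof (intro allI impI)
      fix j assume "j < length C"
      then have "t j \<in> {-1,1}" "s (h j) \<in> {-1,1}" using h(2) t s by auto
      then show "t j * s (h j) \<in> {-1,1}" by auto
    qed
    show "\<forall>x\<in>lamPerpB A. (\<Sum>j<length C. t j * s (h j) * int (C!j) * x!((g \<circ> h) j)) = 0"
    proof
      fix x assume x: "x \<in> lamPerpB A"
      let ?y = "map (\<lambda>j. s j * x!(g j)) [0..<length B]"
      have "(\<Sum>j<length C. t j * s (h j) * int (C!j) * x!((g \<circ> h) j))
         = (\<Sum>j<length C. t j * int (C!j) * ?y!(h j))"
        using h(2) by (intro sum.cong) auto
      also have "\<dots> = 0" using zB sred_transport[OF g(2) s x] zA x by blast
      finally show "(\<Sum>j<length C. t j * s (h j) * int (C!j) * x!((g \<circ> h) j)) = 0" .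
    qed
  qed
qed

section \<open>Equivalence with the official notion of reduction\<close>

lemma Proj_in_perpB_iff:
  assumes "x \<in> lamPerpB A" "I \<subseteq> {..<length A}" "length v = card I"
  shows "Proj I x \<in> perpB v \<longleftrightarrow> (\<Sum>i<card I. v!i * x!(sorted_list_of_set I ! i)) = 0"
proof -
  let ?L = "sorted_list_of_set I"
  have fin: "finite I" using assms(2) finite_subset by blast
  have lx: "length x = length A" "set x \<subseteq> {-1,1}" using assms(1) lamPerpB_iff by blast+
  have P: "Proj I x = map ((!) x) ?L"
    using nths_eq_map_sorted_list_of_set[of I x] assms(2) lx(1) by (simp add: Proj_def)
  have "set (map ((!) x) ?L) \<subseteq> set x" using assms(2) lx(1) fin by auto
  then have signs: "set (Proj I x) \<subseteq> {-1,1}" using lx(2) P by (metis subset_trans)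
  have "(\<Sum>i<length v. v!i * Proj I x ! i) = (\<Sum>i<card I. v!i * x!(?L!i))"
    using assms(3) fin by (intro sum.cong) (simp_all add: P)
  then show ?thesis using signs assms(3) fin by (simp add: perpB_def P)
qed

text \<open>An official reduction gives an index-form reduction: compose the sorted enumeration
  of I with the permutation relating the entries of v to the parts of B.\<close>
lemma reduces_imp_sred:
  assumes "A \<Rightarrow>\<^sub>p B"
  shows "sred A B"
proof -
  obtain I v where pA: "is_partition A" and pB: "is_partition B" and I: "I \<subseteq> {..<length A}"
    and cI: "card I = length B" and vV: "v \<in> Vset B" and pr: "Proj I ` lamPerpB A \<subseteq> perpB v"
    using assms unfolding reduces_def by blast
  let ?m = "length B"
  let ?L = "sorted_list_of_set I"
  obtain ys s where ys: "mset ys = mset B" "length s = ?m" "set s \<subseteq> {-1,1}"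
    "v = map2 (\<lambda>a b. a * int b) s ys"
    using vV unfolding Vset_def by blast
  have lys: "length ys = ?m" using ys(1) mset_eq_length by metis
  have lv: "length v = card I" using ys(2,4) lys cI by simp
  obtain f where f: "bij_betw f {..<?m} {..<?m}" "\<forall>i<?m. B!i = ys!(f i)"
    using permutation_Ex_bij[of B ys] ys(1) lys by auto
  have "finite I" using I finite_subset by blast
  then have bL: "bij_betw ((!) ?L) {..<?m} I" using bij_betw_nth_sorted_list_of_set cI by metis
  define g where "g j = ?L!(f j)" for j
  have bg: "bij_betw g {..<?m} I"
    using bij_betw_trans[OF f(1) bL] unfolding g_def by (simp add: o_def)
  show ?thesis
  proof (rule sredI[where g=g and s="\<lambda>j. s!(f j)", OF pA pB])
    show "inj_on g {..<?m}" using bg bij_betw_imp_inj_on by blast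
    show "g ` {..<?m} \<subseteq> {..<length A}" using bg I bij_betw_imp_surj_on by blast
    have "f j < ?m" if "j < ?m" for j using f(1) that bij_betwE by blast
    then have "s!(f j) \<in> set s" if "j < ?m" for j using that ys(2) by simp
    then show "\<forall>j<?m. s!(f j) \<in> {-1,1}" using ys(3) by blast
    show "\<forall>x\<in>lamPerpB A. (\<Sum>j<?m. s!(f j) * int (B!j) * x!(g j)) = 0"
    proof
      fix x assume x: "x \<in> lamPerpB A"
      have "(\<Sum>j<?m. s!(f j) * int (B!j) * x!(g j)) = (\<Sum>j<?m. (\<lambda>i. v!i * x!(?L!i)) (f j))"
        using \<open>\<And>j. j < ?m \<Longrightarrow> f j < ?m\<close> f(2) by (intro sum.cong) (simp_all add: g_def ys(2,4) lys)
      also have "\<dots> = (\<Sum>i<?m. v!i * x!(?L!i))" by (rule sum.reindex_bij_betw[OF f(1)])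
      also have "\<dots> = 0"
        using Proj_in_perpB_iff[OF x I lv] imageI[OF x, of "Proj I"] pr cI by auto
      finally show "(\<Sum>j<?m. s!(f j) * int (B!j) * x!(g j)) = 0" .
    qed
  qed
qed

lemma signed_arrangement_in_Vset:
  assumes "is_partition B" "bij_betw p {..<length B} {..<length B}"
    "\<forall>i<length B. t i \<in> {-1,1::int}" "t 0 = 1"
  shows "map (\<lambda>i. t i * int (B!(p i))) [0..<length B] \<in> Vset B"
proof -
  let ?m = "length B"
  let ?ys = "map (\<lambda>i. B!(p i)) [0..<?m]"
  let ?s = "map t [0..<?m]"
  have m0: "?m > 0" using assms(1) is_partition_def by simp
  have "mset ?ys = mset (map ((!) B) [0..<?m])" using mset_map_reindex[OF assms(2)] by simp
  then have "mset ?ys = mset B" by (simp add: map_nth)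
  moreover have "set ?s \<subseteq> {-1,1}" using assms(3) by auto
  moreover have "map (\<lambda>i. t i * int (B!(p i))) [0..<?m] = map2 (\<lambda>a b. a * int b) ?s ?ys"
    by (rule nth_equalityI) auto
  moreover have "B!(p 0) \<ge> 1"
    using assms(1,2) m0 bij_betwE unfolding is_partition_def by (metis lessThan_iff nth_mem)
  then have "hd (map (\<lambda>i. t i * int (B!(p i))) [0..<?m]) > 0"
    using m0 assms(4) by (simp add: hd_map upt_conv_Cons)
  ultimately show ?thesis using m0 unfolding Vset_def
    by (intro CollectI exI[of _ ?ys] exI[of _ ?s]) auto
qed

lemma increasing_reordering:
  assumes "inj_on g {..<m}"
  obtains p where "bij_betw p {..<m} {..<m}"
    "\<And>i. i < m \<Longrightarrow> g (p i) = sorted_list_of_set (g ` {..<m}) ! i"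
proof -
  let ?I = "g ` {..<m}"
  let ?L = "sorted_list_of_set ?I"
  have bL: "bij_betw ((!) ?L) {..<m} ?I"
    using bij_betw_nth_sorted_list_of_set[of ?I] assms card_image by fastforce
  have bg: "bij_betw g {..<m} ?I" using assms bij_betw_imageI by blast
  define p where "p = inv_into {..<m} g \<circ> (!) ?L"
  have "bij_betw p {..<m} {..<m}" unfolding p_def
    using bij_betw_trans[OF bL bij_betw_inv_into[OF bg]] .
  moreover have "g (p i) = ?L!i" if "i < m" for i
    using bij_betwE[OF bL] that by (simp add: p_def f_inv_into_f)
  ultimately show ?thesis using that by blast
qed

text \<open>Conversely, an index-form reduction is an official one: take I = g {..<length B},
  order B along the sorted enumeration of I, and normalise the signs so that the first
  entry is positive.\<close>
lemma sred_imp_reduces: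
  assumes "sred A B"
  shows "A \<Rightarrow>\<^sub>p B"
proof -
  obtain g s where pA: "is_partition A" and pB: "is_partition B" and inj: "inj_on g {..<length B}"
    and img: "g ` {..<length B} \<subseteq> {..<length A}" and sg: "\<forall>j<length B. s j \<in> {-1,1::int}"
    and z: "\<forall>x\<in>lamPerpB A. (\<Sum>j<length B. s j * int (B!j) * x!(g j)) = 0"
    using assms by (rule sredE)
  let ?m = "length B"
  define I where "I = g ` {..<?m}"
  let ?L = "sorted_list_of_set I"
  have cI: "card I = ?m" using inj I_def card_image by fastforce
  obtain p where bp: "bij_betw p {..<?m} {..<?m}" and gp: "\<And>i. i < ?m \<Longrightarrow> g (p i) = ?L!i"
    using increasing_reordering[OF inj] unfolding I_def by blast
  have pm: "p i < ?m" if "i < ?m" for i using bij_betwE[OF bp] that by blast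
  have m0: "?m > 0" using pB is_partition_def by simp
  define \<sigma> where "\<sigma> = s (p 0)"
  have \<sigma>: "\<sigma> \<in> {-1,1}" using sg pm[OF m0] unfolding \<sigma>_def by blast
  define t where "t i = \<sigma> * s (p i)" for i
  define v where "v = map (\<lambda>i. t i * int (B!(p i))) [0..<?m]"
  have vV: "v \<in> Vset B" unfolding v_def
  proof (rule signed_arrangement_in_Vset[OF pB bp])
    show "\<forall>i<?m. t i \<in> {-1,1}" using sg pm \<sigma> unfolding t_def by fastforce
    show "t 0 = 1" using \<sigma> unfolding t_def \<sigma>_def by auto
  qed
  have IA: "I \<subseteq> {..<length A}" using img I_def by simp
  have lv: "length v = card I" using cI by (simp add: v_def)
  have "Proj I x \<in> perpB v" if x: "x \<in> lamPerpB A" for x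
  proof -
    have "(\<Sum>i<?m. v!i * x!(?L!i)) = (\<Sum>i<?m. \<sigma> * (\<lambda>j. s j * int (B!j) * x!(g j)) (p i))"
      by (intro sum.cong) (simp_all add: v_def t_def gp)
    also have "\<dots> = \<sigma> * (\<Sum>i<?m. (\<lambda>j. s j * int (B!j) * x!(g j)) (p i))"
      by (simp add: sum_distrib_left)
    also have "(\<Sum>i<?m. (\<lambda>j. s j * int (B!j) * x!(g j)) (p i)) = (\<Sum>j<?m. s j * int (B!j) * x!(g j))"
      by (rule sum.reindex_bij_betw[OF bp])
    also have "\<dots> = 0" using z x by blast
    finally have "(\<Sum>i<card I. v!i * x!(?L!i)) = 0" using cI by simp
    then show ?thesis using Proj_in_perpB_iff[OF x IA lv] by simp
  qed
  then have "Proj I ` lamPerpB A \<subseteq> perpB v" by blast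
  moreover have "?m \<le> length A" using sred_length assms by blast
  ultimately show ?thesis unfolding reduces_def using pA pB cI vV IA by blast
qed

lemma reduces_iff_sred: "A \<Rightarrow>\<^sub>p B \<longleftrightarrow> sred A B"
  using reduces_imp_sred sred_imp_reduces by blast

text \<open>Equivalent partitions reduce to each other (with I the full index set).\<close>
lemma equivalent_imp_sred:
  assumes "equivalent A B"
  shows "sred A B"
proof -
  obtain w where w: "is_partition A" "is_partition B" "length A = length B" "w \<in> Vset B"
    "lamPerpB A = perpB w"
    using assms unfolding equivalent_def by blast
  have "Proj {..<length A} x = x" if "x \<in> lamPerpB A" for x
    using that by (simp add: Proj_def lamPerpB_iff)
  then have "Proj {..<length A} ` lamPerpB A \<subseteq> perpB w" using w(5) by auto
  then have "A \<Rightarrow>\<^sub>p B" unfolding reduces_def using w(1-4) by (auto intro!: exI[of _ "{..<length A}"] bexI[of _ w])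
  then show ?thesis by (rule reduces_imp_sred)
qed

section \<open>Reductions from vanishing linear forms\<close>

definition vanishes_on_perp :: "nat list \<Rightarrow> (nat \<Rightarrow> int) \<Rightarrow> bool" where
  "vanishes_on_perp A w \<longleftrightarrow> (\<forall>x\<in>lamPerpB A. (\<Sum>l<length A. w l * x!l) = 0)"

lemma sred_of_vanishing_form:
  assumes pA: "is_partition A" and w: "vanishes_on_perp A w"
    and S: "S = {l. l < length A \<and> w l \<noteq> 0}" and ne: "S \<noteq> {}"
  shows "\<exists>rho. sred A rho \<and> length rho = card S"
proof -
  have finS: "finite S" using S by simp
  let ?L = "sorted_list_of_set S"
  let ?m = "card S"
  define V where "V = map (\<lambda>l. nat \<bar>w l\<bar>) ?L"
  define rho where "rho = rev (sort V)"
  have lr: "length rho = ?m" and lV: "length V = ?m" using finS by (simp_all add: rho_def V_def)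
  have mr: "mset rho = mset V" by (simp add: rho_def)
  have pr: "is_partition rho" unfolding is_partition_def
  proof (intro conjI ballI)
    show "rho \<noteq> []" using lr ne finS by auto
    show "sorted_wrt (\<ge>) rho" by (simp add: rho_def sorted_wrt_rev)
    fix x assume "x \<in> set rho"
    then have "x \<in> set V" using mr by (metis set_mset_mset)
    then show "x \<ge> 1" using finS S by (auto simp: V_def)
  qed
  obtain f where f: "bij_betw f {..<?m} {..<?m}" "\<forall>i<?m. rho!i = V!(f i)"
    using permutation_Ex_bij[of rho V] mr lr lV by auto
  define g where "g j = ?L!(f j)" for j
  have bg: "bij_betw g {..<?m} S"
    using bij_betw_trans[OF f(1) bij_betw_nth_sorted_list_of_set[OF finS]]
    unfolding g_def by (simp add: o_def)
  have gS: "g j \<in> S" if "j < ?m" for j using bg that bij_betwE by blast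
  have rho_g: "int (rho!j) = \<bar>w (g j)\<bar>" if "j < ?m" for j
    using f that bij_betwE[OF f(1)] finS by (simp add: V_def g_def)
  have "sred A rho"
  proof (rule sredI[where g=g and s="\<lambda>j. sgn (w (g j))", OF pA pr])
    show "inj_on g {..<length rho}" using bg bij_betw_imp_inj_on lr by metis
    show "g ` {..<length rho} \<subseteq> {..<length A}" using bg S lr bij_betw_imp_surj_on by fastforce
    show "\<forall>j<length rho. sgn (w (g j)) \<in> {-1,1}" using gS S lr by (auto simp: sgn_if)
    show "\<forall>x\<in>lamPerpB A. (\<Sum>j<length rho. sgn (w (g j)) * int (rho!j) * x!(g j)) = 0"
    proof
      fix x assume x: "x \<in> lamPerpB A"
      have "(\<Sum>j<length rho. sgn (w (g j)) * int (rho!j) * x!(g j)) = (\<Sum>j<?m. (\<lambda>l. w l * x!l) (g j))"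
        using lr rho_g by (intro sum.cong) (simp_all add: sgn_mult_abs)
      also have "\<dots> = (\<Sum>l\<in>S. w l * x!l)" by (rule sum.reindex_bij_betw[OF bg])
      also have "\<dots> = (\<Sum>l<length A. w l * x!l)"
        by (rule sum.mono_neutral_left) (auto simp: S)
      also have "\<dots> = 0" using w x unfolding vanishes_on_perp_def by blast
      finally show "(\<Sum>j<length rho. sgn (w (g j)) * int (rho!j) * x!(g j)) = 0" .
    qed
  qed
  then show ?thesis using lr by blast
qed

section \<open>Rigidity at minimal length\<close>

definition sred_minimal :: "nat list \<Rightarrow> bool" where
  "sred_minimal A \<longleftrightarrow> (\<forall>rho. sred A rho \<longrightarrow> length A \<le> length rho)"

text \<open>For a minimal A every vanishing form is proportional to A itself: otherwise the form
  A_0 w - w_0 A vanishes, is nonzero, and has support avoiding index 0, which would give a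
  shorter reduction.\<close>
lemma minimal_vanishing_form_proportional:
  assumes pA: "is_partition A" and min: "sred_minimal A" and w: "vanishes_on_perp A w"
    and i: "i < length A"
  shows "w i * int (A!0) = w 0 * int (A!i)"
proof (rule ccontr)
  assume ne: "w i * int (A!0) \<noteq> w 0 * int (A!i)"
  let ?k = "length A"
  define w' where "w' l = int (A!0) * w l - w 0 * int (A!l)" for l
  define S where "S = {l. l < ?k \<and> w' l \<noteq> 0}"
  have "i \<in> S" using i ne by (simp add: S_def w'_def mult.commute)
  have "?k > 0" using pA is_partition_def by simp
  have "card S \<le> card ({..<?k} - {0})" by (rule card_mono) (auto simp: S_def w'_def)
  also have "\<dots> < ?k" using \<open>?k > 0\<close> by simp
  finally have "card S < ?k" .
  moreover have "vanishes_on_perp A w'" unfolding vanishes_on_perp_def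
  proof
    fix x assume x: "x \<in> lamPerpB A"
    have "(\<Sum>l<?k. w' l * x!l) = int (A!0) * (\<Sum>l<?k. w l * x!l) - w 0 * (\<Sum>l<?k. int (A!l) * x!l)"
      by (simp add: w'_def sum_subtractf sum_distrib_left algebra_simps)
    then show "(\<Sum>l<?k. w' l * x!l) = 0" using w x by (simp add: vanishes_on_perp_def lamPerpB_iff)
  qed
  then obtain rho where "sred A rho" "length rho = card S"
    using sred_of_vanishing_form[OF pA _ S_def] \<open>i \<in> S\<close> by blast
  then show False using \<open>card S < ?k\<close> min unfolding sred_minimal_def by fastforce
qed

text \<open>A reduction between partitions of the same length permutes the coordinates
  bijectively, hence gives a vanishing form whose coefficients are the signed parts of B.\<close>
lemma sred_same_length_form:
  assumes "sred A B" "length B = length A"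
  obtains p \<sigma> where "bij_betw p {..<length A} {..<length A}" "\<forall>i<length A. \<sigma> i \<in> {-1,1::int}"
    "vanishes_on_perp A (\<lambda>i. \<sigma> i * int (B!(p i)))"
proof -
  obtain g s where inj: "inj_on g {..<length B}" and img: "g ` {..<length B} \<subseteq> {..<length A}"
    and sg: "\<forall>j<length B. s j \<in> {-1,1::int}"
    and z: "\<forall>x\<in>lamPerpB A. (\<Sum>j<length B. s j * int (B!j) * x!(g j)) = 0"
    using assms(1) by (rule sredE)
  let ?k = "length A"
  have bg: "bij_betw g {..<?k} {..<?k}"
    using inj img assms(2) endo_inj_surj[of "{..<?k}" g] by (simp add: bij_betw_def)
  define p where "p = inv_into {..<?k} g"
  have bp: "bij_betw p {..<?k} {..<?k}" using bij_betw_inv_into[OF bg] p_def by simp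
  have pg: "p (g j) = j" if "j < ?k" for j
    using bg that unfolding p_def by (simp add: bij_betw_inv_into_left)
  have pk: "p i < ?k" if "i < ?k" for i using bij_betwE[OF bp] that by blast
  have "\<forall>i<?k. s (p i) \<in> {-1,1}" using sg pk assms(2) by simp
  moreover have "vanishes_on_perp A (\<lambda>i. s (p i) * int (B!(p i)))" unfolding vanishes_on_perp_def
  proof
    fix x assume x: "x \<in> lamPerpB A"
    have "(\<Sum>i<?k. s (p i) * int (B!(p i)) * x!i) = (\<Sum>j<?k. (\<lambda>i. s (p i) * int (B!(p i)) * x!i) (g j))"
      by (rule sum.reindex_bij_betw[OF bg, symmetric])
    also have "\<dots> = (\<Sum>j<length B. s j * int (B!j) * x!(g j))"
      using assms(2) pg by (intro sum.cong) simp_all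
    finally show "(\<Sum>i<?k. s (p i) * int (B!(p i)) * x!i) = 0" using z x by simp
  qed
  ultimately show ?thesis by (rule that[OF bp])
qed

lemma minimal_sred_multiple:
  assumes min: "sred_minimal A" and prim: "primitive A" and r: "sred A B"
  shows "\<exists>d\<ge>1. B = map (\<lambda>x. d*x) A"
proof -
  have pA: "is_partition A" and pB: "is_partition B" using r sred_partitions by blast+
  let ?k = "length A"
  have len: "length B = ?k" using sred_length[OF r] min r unfolding sred_minimal_def by (simp add: le_antisym)
  obtain p \<sigma> where bp: "bij_betw p {..<?k} {..<?k}" and \<sigma>: "\<forall>i<?k. \<sigma> i \<in> {-1,1::int}"
    and w: "vanishes_on_perp A (\<lambda>i. \<sigma> i * int (B!(p i)))"
    using sred_same_length_form[OF r len] by blast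
  have k0: "?k > 0" using pA is_partition_def by simp
  define b where "b = B!(p 0)"
  have scaled_eq: "A!0 * B!(p i) = b * A!i" if i: "i < ?k" for i
  proof -
    have "\<bar>\<sigma> i * int (B!(p i)) * int (A!0)\<bar> = \<bar>\<sigma> 0 * int (B!(p 0)) * int (A!i)\<bar>"
      using minimal_vanishing_form_proportional[OF pA min w i] by simp
    moreover have "\<bar>\<sigma> i\<bar> = 1" "\<bar>\<sigma> 0\<bar> = 1" using \<sigma> i k0 by auto
    ultimately have "int (A!0 * B!(p i)) = int (b * A!i)" by (simp add: abs_mult b_def mult.commute)
    then show ?thesis by (simp only: of_nat_eq_iff)
  qed
  have "p 0 < ?k" using bp k0 bij_betwE by blast
  then have "A!0 \<in> set A" "b \<in> set B" using k0 len by (simp_all add: b_def)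
  then have "A!0 \<ge> 1" "b \<ge> 1" using pA pB unfolding is_partition_def by blast+
  then have pos: "A!0 > 0" "b > 0" by simp_all
  have "mset (map (\<lambda>x. b*x) A) = mset (map (\<lambda>i. A!0 * B!(p i)) [0..<?k])"
    by (rule arg_cong[where f=mset], rule nth_equalityI) (simp_all add: scaled_eq)
  also have "\<dots> = mset (map (\<lambda>j. A!0 * B!j) [0..<?k])" by (rule mset_map_reindex[OF bp])
  also have "map (\<lambda>j. A!0 * B!j) [0..<?k] = map (\<lambda>x. A!0*x) B"
    by (rule nth_equalityI) (simp_all add: len)
  finally have "mset (map (\<lambda>x. A!0*x) B) = mset (map (\<lambda>x. b*x) A)" ..
  moreover have "sorted_wrt (\<ge>) (map (\<lambda>x. A!0*x) B)" "sorted_wrt (\<ge>) (map (\<lambda>x. b*x) A)"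
    using pA pB sorted_desc_scale unfolding is_partition_def by blast+
  ultimately have "map (\<lambda>x. A!0*x) B = map (\<lambda>x. b*x) A" using sorted_desc_mset_eq by blast
  then show ?thesis using proportional_to_primitive[OF prim pA pB pos] by blast
qed

lemma minimal_primitive_novel:
  assumes pl: "is_partition lam" and prim: "primitive lam" and min: "sred_minimal lam"
    and ne: "lamPerpB lam \<noteq> {}"
  shows "novel lam"
  unfolding novel_def
proof (intro conjI notI allI impI)
  show "is_partition lam" "lamPerpB lam = {} \<Longrightarrow> False" using pl ne by simp_all
next
  assume "\<exists>mu. strictly_reduces lam mu"
  then obtain nu where s: "lam \<Rightarrow>\<^sub>p nu" "\<not> (nu \<Rightarrow>\<^sub>p lam)" unfolding strictly_reduces_def by blast
  have r: "sred lam nu" using s(1) reduces_iff_sred by blast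
  then obtain d where d: "d \<ge> 1" "nu = map (\<lambda>x. d*x) lam" using minimal_sred_multiple[OF min prim] by blast
  have "sred nu lam"
  proof (rule sred_of_perp_subset[OF _ pl])
    show "is_partition nu" using r sred_partitions by blast
    show "length nu = length lam" "lamPerpB nu \<subseteq> lamPerpB lam" using d perpB_scale[of d lam] by simp_all
  qed
  then show False using s(2) reduces_iff_sred by blast
next
  fix nu assume "equivalent lam nu"
  then obtain d where d: "d \<ge> 1" "nu = map (\<lambda>x. d*x) lam"
    using equivalent_imp_sred minimal_sred_multiple[OF min prim] by blast
  obtain y ys where yy: "lam = y # ys" "y \<ge> 1" using pl unfolding is_partition_def by (cases lam) auto
  show "lex_le lam nu"
  proof (cases "d = 1")
    case False
    then have "y < d*y" using d(1) yy(2) by simp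
    then show ?thesis using d(2) yy(1) by (simp add: lex_le_def)
  qed (use d in \<open>simp add: lex_le_def\<close>)
qed

text \<open>Induction on the length: if a shorter
  reduction exists, continue from there; otherwise the primitive submultiple is novel.\<close>
lemma sred_to_novel:
  assumes "is_partition lam" "lamPerpB lam \<noteq> {}"
  shows "\<exists>mu. novel mu \<and> sred lam mu \<and>
           (length mu < length lam \<or> (\<exists>c\<ge>1. lam = map (\<lambda>x. c*x) mu))"
  using assms
proof (induction "length lam" arbitrary: lam rule: less_induct)
  case less
  show ?case
  proof (cases "sred_minimal lam")
    case False
    then obtain nu where nu: "sred lam nu" "length nu < length lam"
      unfolding sred_minimal_def by (auto simp: not_le)
    have "is_partition nu" "lamPerpB nu \<noteq> {}"
      using nu(1) sred_partitions sred_perp_nonempty less.prems(2) by blast+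
    then obtain mu where mu: "novel mu" "sred nu mu" "length mu \<le> length nu"
      using less.hyps[OF nu(2)] by fastforce
    then show ?thesis using sred_trans[OF nu(1) mu(2)] nu(2) by auto
  next
    case True
    obtain c lam0 where p0: "is_partition lam0" "primitive lam0" and c: "c \<ge> 1"
      and lc: "lam = map (\<lambda>x. c*x) lam0"
      using primitive_decomposition[OF less.prems(1)] by blast
    have perp: "lamPerpB lam0 = lamPerpB lam" using perpB_scale[of c lam0] c lc by simp
    have r: "sred lam lam0" using sred_of_perp_subset[OF less.prems(1) p0(1)] lc perp by simp
    have "sred_minimal lam0"
      unfolding sred_minimal_def
    proof (intro allI impI)
      fix rho assume "sred lam0 rho"
      then have "length lam \<le> length rho" using True sred_trans[OF r] unfolding sred_minimal_def by blast
      then show "length lam0 \<le> length rho" using lc by simp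
    qed
    then have "novel lam0" using minimal_primitive_novel p0 less.prems(2) perp by simp
    then show ?thesis using r c lc by blast
  qed
qed

theorem mainTheorem4:
  fixes lam :: "nat list"
  assumes "is_partition lam"
  shows "(novel lam \<or> (\<exists>c::nat. \<exists>mu. c \<ge> 2 \<and> novel mu \<and> lam = map (\<lambda>x. c * x) mu))
    \<or> (\<exists>mu. novel mu \<and> length mu < length lam \<and> (lam \<Rightarrow>\<^sub>p mu))
    \<or> lamPerpB lam = {}"
proof (cases "lamPerpB lam = {}")
  case False
  then obtain mu where mu: "novel mu" "sred lam mu"
    and alt: "length mu < length lam \<or> (\<exists>c\<ge>1. lam = map (\<lambda>x. c*x) mu)"
    using sred_to_novel[OF assms] by blast
  show ?thesis
  proof (cases "length mu < length lam")
    case True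
    then show ?thesis using mu reduces_iff_sred by blast
  next
    case False
    then obtain c where c: "c \<ge> 1" "lam = map (\<lambda>x. c*x) mu" using alt by blast
    show ?thesis
    proof (cases "c = 1")
      case True
      then show ?thesis using mu(1) c(2) by simp
    next
      case False
      then have "c \<ge> 2" using c(1) by simp
      then show ?thesis using mu(1) c(2) by blast
    qed
  qed
qed simp

end
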